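(* Fix real numbers $S_1>0$ and $t>0$. For $S_2\ge 0$ define $$R_{DF}(S_2)=\frac12\max_{0\le\rho\le1}\min\Big\{C(tS_1)+C\big((1-\rho^2)S_1\big),\;C(S_1)+C\big(S_1+S_2+2\rho\sqrt{S_1S_2}\big)\Big\},$$ $$R_{CF}(S_2)=\frac12C(S_1)+\frac12C\Big(S_1+\frac{tS_1S_2}{1+(t+1)S_1+S_2}\Big),$$ where $C(x)=\log_2(1+x)$. Then both $R_{DF}$ and $R_{CF}$ are concave functions of $S_2$ on $[0,\infty)$.
   Context: These are the Decode-and-Forward (DF) and Compress-and-Forward (CF) achievable rates of a half-duplex Gaussian relay channel in one fading block, where $S_1=|h_{31}|^2P_1$ is the source–destination SNR, $t=|h_{21}|^2/|h_{31}|^2$ is the ratio of source–relay to source–destination channel power gains, and $S_2=2|h_{32}|^2P_2$ is the relay–destination SNR with relay power $P_2$. *)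

theory Defs
  imports "HOL-Analysis.Analysis"
begin

definition Cap :: "real \<Rightarrow> real" where
  "Cap x = log 2 (1 + x)"

text \<open>Decode-and-forward rate; the maximum over rho in [0,1] is written as a supremum
  (it is attained, the objective being continuous on a compact interval).\<close>
definition R_DF :: "real \<Rightarrow> real \<Rightarrow> real \<Rightarrow> real" where
  "R_DF S1 t S2 = (1/2) * (SUP \<rho>\<in>{0..1::real}.
      min (Cap (t * S1) + Cap ((1 - \<rho>\<^sup>2) * S1))
          (Cap S1 + Cap (S1 + S2 + 2 * \<rho> * sqrt (S1 * S2))))"

definition R_CF :: "real \<Rightarrow> real \<Rightarrow> real \<Rightarrow> real" where
  "R_CF S1 t S2 = (1/2) * Cap S1
      + (1/2) * Cap (S1 + t * S1 * S2 / (1 + (t + 1) * S1 + S2))"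

end

theory Submission
  imports Defs
begin

text \<open>Both rates are built from the concave nondecreasing function \<open>Cap\<close>.
  For CF, the argument of the second \<open>Cap\<close> is a concave function of \<open>S2\<close>
  (of the form \<open>c s / (a + s)\<close>), so the composition is concave.
  For DF, a supremum over \<open>\<rho>\<close> of a family that is jointly concave in \<open>(S2, \<rho>)\<close> would be
  concave; the objective is not, but it becomes jointly concave after the substitution
  \<open>w = \<rho> \<surd>S2\<close>: the term \<open>\<rho> \<surd>(S1 S2)\<close> turns linear and \<open>\<rho>\<^sup>2 = w\<^sup>2 / S2\<close> is jointly convex.
  So every convex combination of two points \<open>(S2, \<rho>)\<close> is dominated by a point \<open>(S2', \<rho>')\<close> with
  \<open>S2'\<close> the combination of the \<open>S2\<close>'s, which suffices for concavity of the supremum.\<close>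

lemma concave_on_mono_comp:
  fixes g :: "'a::real_vector \<Rightarrow> real"
  assumes h: "concave_on T h" "mono_on T h" and g: "concave_on S g" "g ` S \<subseteq> T"
  shows "concave_on S (\<lambda>x. h (g x))"
  unfolding concave_on_iff
proof (intro conjI ballI allI impI)
  show "convex S" using g(1) by (rule concave_on_imp_convex)
  fix x y and u v :: real
  assume xy: "x \<in> S" "y \<in> S" and uv: "0 \<le> u" "0 \<le> v" "u + v = 1"
  have "u *\<^sub>R x + v *\<^sub>R y \<in> S"
    using convexD[OF concave_on_imp_convex[OF g(1)]] xy uv by blast
  moreover have "g x \<in> T" "g y \<in> T" using g(2) xy by auto
  ultimately have T: "g x \<in> T" "g y \<in> T" "u * g x + v * g y \<in> T" "g (u *\<^sub>R x + v *\<^sub>R y) \<in> T"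
    using convexD[OF concave_on_imp_convex[OF h(1)]] g(2) uv by auto
  have "u * h (g x) + v * h (g y) \<le> h (u * g x + v * g y)"
    using h(1) T uv unfolding concave_on_iff by auto
  also have "\<dots> \<le> h (g (u *\<^sub>R x + v *\<^sub>R y))"
    using g(1) xy uv T by (intro mono_onD[OF h(2)]) (auto simp: concave_on_iff)
  finally show "u * h (g x) + v * h (g y) \<le> h (g (u *\<^sub>R x + v *\<^sub>R y))" .
qed

lemma mult_SUP_add_le:
  fixes h :: "'a \<Rightarrow> real"
  assumes "A \<noteq> {}" "0 \<le> w" "\<And>a. a \<in> A \<Longrightarrow> w * h a + z \<le> c"
  shows "w * (SUP a\<in>A. h a) + z \<le> c"
proof (cases "w = 0")
  case True
  then show ?thesis using assms(1,3) by auto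
next
  case False
  then have "w > 0" using assms(2) by simp
  have "(SUP a\<in>A. h a) \<le> (c - z) / w"
    using assms(1,3) \<open>w > 0\<close> by (intro cSUP_least) (auto simp: field_simps)
  then show ?thesis using \<open>w > 0\<close> by (simp add: field_simps)
qed

lemma concave_on_SUP:
  fixes f :: "'a::real_vector \<Rightarrow> 'b \<Rightarrow> real"
  assumes "convex S" "T \<noteq> {}" and bdd: "\<And>x. x \<in> S \<Longrightarrow> bdd_above (f x ` T)"
    and comb: "\<And>x y a b u v. \<lbrakk>x \<in> S; y \<in> S; a \<in> T; b \<in> T; 0 \<le> u; 0 \<le> v; u + v = 1\<rbrakk>
      \<Longrightarrow> \<exists>c\<in>T. u * f x a + v * f y b \<le> f (u *\<^sub>R x + v *\<^sub>R y) c"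
  shows "concave_on S (\<lambda>x. SUP a\<in>T. f x a)"
  unfolding concave_on_iff
proof (intro conjI ballI allI impI)
  show "convex S" by fact
  fix x y and u v :: real
  assume xy: "x \<in> S" "y \<in> S" and uv: "0 \<le> u" "0 \<le> v" "u + v = 1"
  let ?z = "u *\<^sub>R x + v *\<^sub>R y"
  have "?z \<in> S" using convexD[OF assms(1)] xy uv by blast
  have pointwise: "u * f x a + v * f y b \<le> (SUP c\<in>T. f ?z c)" if ab: "a \<in> T" "b \<in> T" for a b
  proof -
    obtain c where c: "c \<in> T" "u * f x a + v * f y b \<le> f ?z c"
      using comb[OF xy ab uv] by blast
    moreover have "f ?z c \<le> (SUP c\<in>T. f ?z c)"
      using c(1) bdd[OF \<open>?z \<in> S\<close>] by (rule cSUP_upper)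
    ultimately show ?thesis by linarith
  qed
  have "u * (SUP a\<in>T. f x a) + v * f y b \<le> (SUP c\<in>T. f ?z c)" if "b \<in> T" for b
    using assms(2) uv pointwise that by (intro mult_SUP_add_le) auto
  then have "v * (SUP b\<in>T. f y b) + u * (SUP a\<in>T. f x a) \<le> (SUP c\<in>T. f ?z c)"
    using assms(2) uv by (intro mult_SUP_add_le) (auto simp: add.commute)
  then show "u * (SUP a\<in>T. f x a) + v * (SUP b\<in>T. f y b) \<le> (SUP c\<in>T. f ?z c)"
    by simp
qed

lemma weighted_Cauchy_Schwarz:
  fixes u v a b c d :: real
  assumes "0 \<le> u" "0 \<le> v"
  shows "(u * a * b + v * c * d)\<^sup>2 \<le> (u * a\<^sup>2 + v * c\<^sup>2) * (u * b\<^sup>2 + v * d\<^sup>2)"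
proof -
  have "(u * a\<^sup>2 + v * c\<^sup>2) * (u * b\<^sup>2 + v * d\<^sup>2) - (u * a * b + v * c * d)\<^sup>2
      = u * v * (a * d - c * b)\<^sup>2"
    by (simp add: algebra_simps power2_eq_square)
  moreover have "u * v * (a * d - c * b)\<^sup>2 \<ge> 0" using assms by simp
  ultimately show ?thesis by linarith
qed

lemma convex_comb_min_le:
  fixes u v a b c d :: real
  assumes "0 \<le> u" "0 \<le> v"
  shows "u * min a b + v * min c d \<le> min (u * a + v * c) (u * b + v * d)"
  using assms by (simp add: add_mono mult_left_mono)

lemma concave_on_mult_divide_add:
  fixes a c :: real
  assumes "0 < a" "0 \<le> c"
  shows "concave_on {0..} (\<lambda>s. c * s / (a + s))"
proof (rule f''_le0_imp_concave)
  show "convex {0::real..}" by (simp add: convex_real_interval)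
  fix s :: real assume "s \<in> {0..}"
  then have s: "a + s > 0" using assms by simp
  show "((\<lambda>s. c * s / (a + s)) has_real_derivative c * a / (a + s)\<^sup>2) (at s)"
    using s by (auto intro!: derivative_eq_intros simp: field_simps power2_eq_square)
  show "((\<lambda>s. c * a / (a + s)\<^sup>2) has_real_derivative - 2 * c * a / (a + s) ^ 3) (at s)"
    using s by (auto intro!: derivative_eq_intros simp: divide_simps eval_nat_numeral)
  show "- 2 * c * a / (a + s) ^ 3 \<le> 0"
    using s assms by (simp add: divide_nonpos_pos)
qed

lemma Cap_mono: "-1 < a \<Longrightarrow> a \<le> b \<Longrightarrow> Cap a \<le> Cap b"
  unfolding Cap_def by simp

lemma mono_on_Cap: "mono_on {-1<..} Cap"
  by (auto intro: mono_onI Cap_mono)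

lemma Cap_convex_comb_le:
  assumes "-1 < a" "-1 < b" "0 \<le> u" "0 \<le> v" "u + v = 1"
  shows "u * Cap a + v * Cap b \<le> Cap (u * a + v * b)"
proof -
  have "u * log 2 (1 + a) + v * log 2 (1 + b) \<le> log 2 (u * (1 + a) + v * (1 + b))"
    using log_concave[of 2] assms unfolding concave_on_iff by auto
  moreover have "u * (1 + a) + v * (1 + b) = 1 + (u * a + v * b)"
    using assms(5) by (simp add: algebra_simps)
  ultimately show ?thesis unfolding Cap_def by simp
qed

lemma concave_on_Cap: "concave_on {-1<..} Cap"
  by (auto simp: concave_on_iff convex_real_interval intro: Cap_convex_comb_le)

lemma concave_on_R_CF:
  assumes "S1 > 0" "t \<ge> 0"
  shows "concave_on {0..} (R_CF S1 t)"
proof -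
  let ?g = "\<lambda>s. S1 + t * S1 * s / (1 + (t + 1) * S1 + s)"
  have "concave_on {0..} ?g"
    using assms concave_on_mult_divide_add[of "1 + (t + 1) * S1" "t * S1"]
    by (intro concave_on_add) (auto simp: concave_on_const convex_real_interval add_pos_nonneg)
  moreover have "?g ` {0..} \<subseteq> {-1<..}"
    using assms by (auto intro!: add_nonneg_nonneg divide_nonneg_nonneg simp del: minus_less_iff
      intro: less_le_trans[of "-1" 0])
  ultimately have "concave_on {0..} (\<lambda>s. Cap (?g s))"
    by (rule concave_on_mono_comp[OF concave_on_Cap mono_on_Cap])
  then show ?thesis
    unfolding R_CF_def
    by (intro concave_on_add concave_on_cmul) (auto simp: concave_on_const convex_real_interval)
qed

definition DF_objective :: "real \<Rightarrow> real \<Rightarrow> real \<Rightarrow> real \<Rightarrow> real" where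
  "DF_objective S1 t S2 \<rho> = min (Cap (t * S1) + Cap ((1 - \<rho>\<^sup>2) * S1))
                                (Cap S1 + Cap (S1 + S2 + 2 * \<rho> * sqrt (S1 * S2)))"

lemma R_DF_eq_SUP: "R_DF S1 t S2 = 1/2 * (SUP \<rho>\<in>{0..1}. DF_objective S1 t S2 \<rho>)"
  by (simp add: R_DF_def DF_objective_def)

lemma bdd_above_DF_objective:
  assumes "S1 > 0"
  shows "bdd_above (DF_objective S1 t S2 ` {0..1})"
proof (rule bdd_aboveI2)
  fix \<rho> :: real assume "\<rho> \<in> {0..1}"
  then have "0 \<le> (1 - \<rho>\<^sup>2) * S1" using assms by (simp add: power_le_one)
  then have "Cap ((1 - \<rho>\<^sup>2) * S1) \<le> Cap S1"
    using assms by (intro Cap_mono) (auto simp: mult_left_le_one_le)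
  then show "DF_objective S1 t S2 \<rho> \<le> Cap (t * S1) + Cap S1"
    unfolding DF_objective_def by simp
qed

lemma correlation_convex_comb:
  fixes x y u v r1 r2 :: real
  assumes x: "0 \<le> x" and y: "0 \<le> y" and uv: "0 \<le> u" "0 \<le> v" "u + v = 1"
    and r: "r1 \<in> {0..1}" "r2 \<in> {0..1}"
  obtains \<rho> where "\<rho> \<in> {0..1}"
    and "\<rho> * sqrt (u * x + v * y) = u * r1 * sqrt x + v * r2 * sqrt y"
    and "\<rho>\<^sup>2 \<le> u * r1\<^sup>2 + v * r2\<^sup>2"
proof -
  \<comment> \<open>The witness is \<open>w / \<surd>z\<close> for \<open>w = \<rho> \<surd>S2\<close> combined linearly; when \<open>z = 0\<close> it is \<open>0\<close>, since \<open>w / 0 = 0\<close>.\<close>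
  define z where "z = u * x + v * y"
  define w where "w = u * r1 * sqrt x + v * r2 * sqrt y"
  have z: "z \<ge> 0" and w: "w \<ge> 0" using x y uv r by (auto simp: z_def w_def)
  have "w\<^sup>2 \<le> (u * r1\<^sup>2 + v * r2\<^sup>2) * z"
    using weighted_Cauchy_Schwarz[OF uv(1,2), of r1 "sqrt x" r2 "sqrt y"] x y
    by (simp add: w_def z_def)
  then have rho2: "(w / sqrt z)\<^sup>2 \<le> u * r1\<^sup>2 + v * r2\<^sup>2"
    using z uv by (cases "z = 0") (simp_all add: power_divide divide_le_eq)
  have rho_sqrt: "w / sqrt z * sqrt z = w"
  proof (cases "z = 0")
    case True
    then have "u * x = 0" "v * y = 0" using x y uv by (auto simp: z_def add_nonneg_eq_0_iff)
    then have "w = 0" by (auto simp: w_def)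
    then show ?thesis by simp
  next
    case False
    then show ?thesis using z by simp
  qed
  have "u * r1\<^sup>2 + v * r2\<^sup>2 \<le> u * 1 + v * 1"
    using uv r by (intro add_mono mult_left_mono) (auto simp: power_le_one)
  then have "(w / sqrt z)\<^sup>2 \<le> 1" using rho2 uv by simp
  then have "w / sqrt z \<in> {0..1}"
    using w z by (auto simp: power_le_one_iff)
  with rho_sqrt rho2 show ?thesis
    using that unfolding z_def w_def by blast
qed

lemma broadcast_cut_convex_comb:
  assumes S1: "S1 > 0" and uv: "0 \<le> u" "0 \<le> v" "u + v = 1"
    and r: "r1 \<in> {0..1}" "r2 \<in> {0..1}" and rho2: "\<rho>\<^sup>2 \<le> u * r1\<^sup>2 + v * r2\<^sup>2"
  shows "u * Cap ((1 - r1\<^sup>2) * S1) + v * Cap ((1 - r2\<^sup>2) * S1) \<le> Cap ((1 - \<rho>\<^sup>2) * S1)"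
proof -
  have v: "v = 1 - u" using uv(3) by simp
  have nonneg: "(1 - r1\<^sup>2) * S1 \<ge> 0" "(1 - r2\<^sup>2) * S1 \<ge> 0"
    using r S1 by (auto simp: power_le_one)
  then have "u * Cap ((1 - r1\<^sup>2) * S1) + v * Cap ((1 - r2\<^sup>2) * S1)
      \<le> Cap (u * ((1 - r1\<^sup>2) * S1) + v * ((1 - r2\<^sup>2) * S1))"
    using uv by (intro Cap_convex_comb_le) auto
  also have "\<dots> \<le> Cap ((1 - \<rho>\<^sup>2) * S1)"
  proof (rule Cap_mono)
    show "-1 < u * ((1 - r1\<^sup>2) * S1) + v * ((1 - r2\<^sup>2) * S1)"
      using nonneg uv by (smt (verit) mult_nonneg_nonneg)
    have "u * ((1 - r1\<^sup>2) * S1) + v * ((1 - r2\<^sup>2) * S1) = (1 - (u * r1\<^sup>2 + v * r2\<^sup>2)) * S1"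
      by (simp add: v algebra_simps)
    also have "\<dots> \<le> (1 - \<rho>\<^sup>2) * S1"
      using rho2 S1 by (intro mult_right_mono) auto
    finally show "u * ((1 - r1\<^sup>2) * S1) + v * ((1 - r2\<^sup>2) * S1) \<le> (1 - \<rho>\<^sup>2) * S1" .
  qed
  finally show ?thesis .
qed

lemma MAC_cut_convex_comb:
  assumes S1: "S1 > 0" and x: "0 \<le> x" and y: "0 \<le> y" and uv: "0 \<le> u" "0 \<le> v" "u + v = 1"
    and r: "r1 \<in> {0..1}" "r2 \<in> {0..1}"
    and rho_sqrt: "\<rho> * sqrt (u * x + v * y) = u * r1 * sqrt x + v * r2 * sqrt y"
  shows "u * Cap (S1 + x + 2 * r1 * sqrt (S1 * x)) + v * Cap (S1 + y + 2 * r2 * sqrt (S1 * y))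
      \<le> Cap (S1 + (u * x + v * y) + 2 * \<rho> * sqrt (S1 * (u * x + v * y)))"
proof -
  have v: "v = 1 - u" using uv(3) by simp
  have pos: "0 < S1 + s + 2 * r * sqrt (S1 * s)" if "0 \<le> s" "r \<in> {0..1}" for s r
    using S1 that by (auto intro!: add_pos_nonneg)
  have "u * Cap (S1 + x + 2 * r1 * sqrt (S1 * x)) + v * Cap (S1 + y + 2 * r2 * sqrt (S1 * y))
      \<le> Cap (u * (S1 + x + 2 * r1 * sqrt (S1 * x)) + v * (S1 + y + 2 * r2 * sqrt (S1 * y)))"
    using pos[OF x r(1)] pos[OF y r(2)] uv by (intro Cap_convex_comb_le) auto
  also have "u * (S1 + x + 2 * r1 * sqrt (S1 * x)) + v * (S1 + y + 2 * r2 * sqrt (S1 * y))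
      = S1 + (u * x + v * y) + 2 * sqrt S1 * (u * r1 * sqrt x + v * r2 * sqrt y)"
    by (simp add: v real_sqrt_mult algebra_simps)
  also have "\<dots> = S1 + (u * x + v * y) + 2 * \<rho> * sqrt (S1 * (u * x + v * y))"
    by (simp add: rho_sqrt[symmetric] real_sqrt_mult)
  finally show ?thesis .
qed

lemma DF_objective_convex_comb:
  assumes S1: "S1 > 0" and x: "0 \<le> x" and y: "0 \<le> y" and uv: "0 \<le> u" "0 \<le> v" "u + v = 1"
    and r: "r1 \<in> {0..1}" "r2 \<in> {0..1}"
  shows "\<exists>\<rho>\<in>{0..1}. u * DF_objective S1 t x r1 + v * DF_objective S1 t y r2
                    \<le> DF_objective S1 t (u * x + v * y) \<rho>"
proof -
  obtain \<rho> where \<rho>: "\<rho> \<in> {0..1}"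
    and rho_sqrt: "\<rho> * sqrt (u * x + v * y) = u * r1 * sqrt x + v * r2 * sqrt y"
    and rho2: "\<rho>\<^sup>2 \<le> u * r1\<^sup>2 + v * r2\<^sup>2"
    using correlation_convex_comb[OF x y uv r] .
  have v: "v = 1 - u" using uv(3) by simp
  have const_sum: "u * (K + P1) + v * (K + P2) = K + (u * P1 + v * P2)" for K P1 P2 :: real
    by (simp add: v algebra_simps)
  have "u * DF_objective S1 t x r1 + v * DF_objective S1 t y r2
      \<le> min (u * (Cap (t * S1) + Cap ((1 - r1\<^sup>2) * S1)) + v * (Cap (t * S1) + Cap ((1 - r2\<^sup>2) * S1)))
            (u * (Cap S1 + Cap (S1 + x + 2 * r1 * sqrt (S1 * x)))
              + v * (Cap S1 + Cap (S1 + y + 2 * r2 * sqrt (S1 * y))))"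
    unfolding DF_objective_def using uv(1,2) by (rule convex_comb_min_le)
  also have "\<dots> \<le> DF_objective S1 t (u * x + v * y) \<rho>"
    unfolding DF_objective_def const_sum
    using broadcast_cut_convex_comb[OF S1 uv r rho2] MAC_cut_convex_comb[OF S1 x y uv r rho_sqrt]
    by (intro min.mono add_left_mono)
  finally show ?thesis using \<rho> by blast
qed

lemma concave_on_R_DF:
  assumes "S1 > 0"
  shows "concave_on {0..} (R_DF S1 t)"
proof -
  have "concave_on {0..} (\<lambda>S2. SUP \<rho>\<in>{0..1}. DF_objective S1 t S2 \<rho>)"
    using assms DF_objective_convex_comb[OF assms]
    by (intro concave_on_SUP bdd_above_DF_objective) (auto simp: convex_real_interval)
  then show ?thesis
    unfolding R_DF_eq_SUP by (intro concave_on_cmul) auto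
qed

theorem theorem1:
  fixes S1 t :: real
  assumes "S1 > 0" and "t > 0"
  shows "concave_on {0..} (R_DF S1 t) \<and> concave_on {0..} (R_CF S1 t)"
  using concave_on_R_DF[OF assms(1)] concave_on_R_CF[OF assms(1) less_imp_le[OF assms(2)]] by blast

end
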